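(* Let $A\in\mathbb{S}^n$ be a non-zero diagonal matrix and let $\mathcal{L}\subset\mathbb{S}^n$ be the linear subspace defined by $\kappa_{ij}=0$ for all $i\neq j$ together with $\mathrm{tr}(AK)=0$ (where $K=(\kappa_{ij})$), and assume $\mathcal{L}$ is regular. Then the ML degree of $\mathcal{L}$ is $\mathrm{rk}(A)-1$.
   Context: $\mathbb{S}^n$ denotes the space of complex symmetric $n\times n$ matrices. A linear subspace $\mathcal{L}$ is regular if it contains a full-rank matrix. $\mathcal{L}^\perp=\{\Sigma:\mathrm{tr}(K\Sigma)=0\ \forall K\in\mathcal{L}\}$. The reciprocal variety $\mathcal{L}^{-1}$ is the Zariski closure of the set of inverses of invertible matrices in $\mathcal{L}$. The ML degree of $\mathcal{L}$ is the number of matrices in $\mathcal{L}^{-1}\cap(\mathcal{L}^\perp+S)$ for generic $S\in\mathbb{S}^n$. *)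

theory Defs
  imports "HOL-Analysis.Analysis"
begin

definition sym_mats :: "(complex^'n^'n) set" where
  "sym_mats = {M. transpose M = M}"

inductive poly_fun :: "(complex^'n^'n \<Rightarrow> complex) \<Rightarrow> bool" where
  const: "poly_fun (\<lambda>M. c)"
| coord: "poly_fun (\<lambda>M. M $ i $ j)"
| add: "poly_fun p \<Longrightarrow> poly_fun q \<Longrightarrow> poly_fun (\<lambda>M. p M + q M)"
| mult: "poly_fun p \<Longrightarrow> poly_fun q \<Longrightarrow> poly_fun (\<lambda>M. p M * q M)"

definition zariski_closed :: "(complex^'n^'n) set \<Rightarrow> bool" where
  "zariski_closed Z \<longleftrightarrow> (\<exists>P. (\<forall>p\<in>P. poly_fun p) \<and> Z = {M. \<forall>p\<in>P. p M = 0})"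

definition zariski_closure :: "(complex^'n^'n) set \<Rightarrow> (complex^'n^'n) set" where
  "zariski_closure X = \<Inter>{Z. zariski_closed Z \<and> X \<subseteq> Z}"

definition orth_space :: "(complex^'n^'n) set \<Rightarrow> (complex^'n^'n) set" where
  "orth_space L = {\<Sigma>\<in>sym_mats. \<forall>K\<in>L. trace (K ** \<Sigma>) = 0}"

definition reciprocal_variety :: "(complex^'n^'n) set \<Rightarrow> (complex^'n^'n) set" where
  "reciprocal_variety L = zariski_closure (matrix_inv ` {K\<in>L. invertible K})"

definition regular_subspace :: "(complex^'n^'n) set \<Rightarrow> bool" where
  "regular_subspace L \<longleftrightarrow> (\<exists>K\<in>L. invertible K)"

definition ml_set :: "(complex^'n^'n) set \<Rightarrow> complex^'n^'n \<Rightarrow> (complex^'n^'n) set" where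
  "ml_set L S = reciprocal_variety L \<inter> {\<Sigma> + S | \<Sigma>. \<Sigma> \<in> orth_space L}"

text \<open>"The ML degree of L is d": for generic S in S^n (i.e. outside the zero
  set of some polynomial that does not vanish identically on S^n) the set
  ml_set L S is finite with exactly d elements.\<close>
definition has_ml_degree :: "(complex^'n^'n) set \<Rightarrow> nat \<Rightarrow> bool" where
  "has_ml_degree L d \<longleftrightarrow>
     (\<exists>p. poly_fun p \<and> (\<exists>S0\<in>sym_mats. p S0 \<noteq> 0) \<and>
        (\<forall>S\<in>sym_mats. p S \<noteq> 0 \<longrightarrow> finite (ml_set L S) \<and> card (ml_set L S) = d))"

definition is_diagonal :: "complex^'n^'n \<Rightarrow> bool" where
  "is_diagonal A \<longleftrightarrow> (\<forall>i j. i \<noteq> j \<longrightarrow> A $ i $ j = 0)"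

end

theory Submission
  imports Defs "Subresultants.Subresultant_Gcd" "HOL-Computational_Algebra.Field_as_Ring"
    "HOL-Computational_Algebra.Fundamental_Theorem_Algebra"
begin

text \<open>Let \<open>a\<close> be the diagonal of \<open>A\<close>. Then \<L> consists of the matrices \<open>diag k\<close> with
  \<open>\<Sum> a\<^sub>i k\<^sub>i = 0\<close>, its inverses satisfy \<open>\<Sum> a\<^sub>i / w\<^sub>i = 0\<close>, and the orthogonal complement meets
  the diagonal matrices in the multiples of \<open>diag a\<close>. Clearing denominators, \<open>\<L>\<^sup>-\<^sup>1\<close> lies in a
  hypersurface of diagonal matrices, so the points of \<open>\<L>\<^sup>-\<^sup>1 \<inter> (\<L>\<^sup>\<bottom> + S)\<close> are of the form
  \<open>diag (S\<^sub>i\<^sub>i + t a\<^sub>i)\<close> with \<open>t\<close> a root of \<open>P\<^sub>S'\<close>, where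
  \<open>P\<^sub>S(t) = \<Prod>\<^bsub>a\<^sub>i \<noteq> 0\<^esub> (S\<^sub>i\<^sub>i + t a\<^sub>i)\<close>; conversely such a point is the inverse of an element
  of \<L> as soon as \<open>P\<^sub>S(t) \<noteq> 0\<close>. For generic \<open>S\<close>, \<open>P\<^sub>S'\<close> has \<open>rk A - 1\<close> simple roots, none shared
  with \<open>P\<^sub>S\<close>. Genericity is the non-vanishing of a product of resultants, witnessed by
  \<open>S\<^sub>i\<^sub>i = a\<^sub>i c\<^sub>i\<close> for distinct reals \<open>c\<^sub>i\<close>, where all roots of \<open>P\<^sub>S\<close> and \<open>P\<^sub>S'\<close> are real
  and simple.\<close>

no_notation Matrix.vec_index (infixl "$" 100)

section \<open>Polynomial functions and Zariski closures\<close>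

lemma poly_fun_const_mult: "poly_fun f \<Longrightarrow> poly_fun (\<lambda>M. c * f M)"
  by (rule poly_fun.mult[OF poly_fun.const])

lemma poly_fun_if: "poly_fun f \<Longrightarrow> poly_fun g \<Longrightarrow> poly_fun (\<lambda>M. if P then f M else g M)"
  by (cases P) simp_all

lemma poly_fun_sum:
  assumes "finite X" "\<And>x. x \<in> X \<Longrightarrow> poly_fun (f x)"
  shows "poly_fun (\<lambda>M. \<Sum>x\<in>X. f x M)"
  using assms
proof (induction X rule: finite_induct)
  case empty
  then show ?case using poly_fun.const[of 0] by simp
next
  case (insert x F)
  then have "poly_fun (\<lambda>M. f x M + (\<Sum>x\<in>F. f x M))"
    by (intro poly_fun.add) auto
  then show ?case using insert by simp
qed

lemma poly_fun_prod:
  assumes "finite X" "\<And>x. x \<in> X \<Longrightarrow> poly_fun (f x)"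
  shows "poly_fun (\<lambda>M. \<Prod>x\<in>X. f x M)"
  using assms
proof (induction X rule: finite_induct)
  case empty
  then show ?case using poly_fun.const[of 1] by simp
next
  case (insert x F)
  then have "poly_fun (\<lambda>M. f x M * (\<Prod>x\<in>F. f x M))"
    by (intro poly_fun.mult) auto
  then show ?case using insert by simp
qed

lemma matrix_inv_in_reciprocal_variety:
  "K \<in> L \<Longrightarrow> invertible K \<Longrightarrow> matrix_inv K \<in> reciprocal_variety L"
  unfolding reciprocal_variety_def zariski_closure_def by blast

lemma reciprocal_variety_subset_zariski_closed:
  assumes "zariski_closed Z" "\<And>K. K \<in> L \<Longrightarrow> invertible K \<Longrightarrow> matrix_inv K \<in> Z"
  shows "reciprocal_variety L \<subseteq> Z"
  using assms unfolding reciprocal_variety_def zariski_closure_def by blast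

definition poly_fun_coeffs :: "(complex^'n^'n \<Rightarrow> complex poly) \<Rightarrow> bool" where
  "poly_fun_coeffs Q \<longleftrightarrow> (\<forall>k. poly_fun (\<lambda>M. coeff (Q M) k))"

lemma poly_fun_coeffs_linear:
  assumes "poly_fun f" "poly_fun g"
  shows "poly_fun_coeffs (\<lambda>M. [:f M, g M:])"
  unfolding poly_fun_coeffs_def
proof
  fix k
  show "poly_fun (\<lambda>M. coeff [:f M, g M:] k)"
  proof (cases k)
    case 0
    then show ?thesis using assms by simp
  next
    case (Suc k')
    then show ?thesis using assms poly_fun.const[of 0] by (cases k') simp_all
  qed
qed

lemma poly_fun_coeffs_1: "poly_fun_coeffs (\<lambda>M. 1)"
  unfolding poly_fun_coeffs_def by (simp add: poly_fun.const)

lemma poly_fun_coeffs_mult: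
  assumes "poly_fun_coeffs P" "poly_fun_coeffs Q"
  shows "poly_fun_coeffs (\<lambda>M. P M * Q M)"
  using assms unfolding poly_fun_coeffs_def coeff_mult
  by (intro allI poly_fun_sum) (auto intro!: poly_fun.mult)

lemma poly_fun_coeffs_prod:
  assumes "finite X" "\<And>x. x \<in> X \<Longrightarrow> poly_fun_coeffs (f x)"
  shows "poly_fun_coeffs (\<lambda>M. \<Prod>x\<in>X. f x M)"
  using assms
proof (induction X rule: finite_induct)
  case empty
  then show ?case using poly_fun_coeffs_1 by simp
next
  case (insert x F)
  then have "poly_fun_coeffs (\<lambda>M. f x M * (\<Prod>x\<in>F. f x M))"
    by (intro poly_fun_coeffs_mult) auto
  then show ?case using insert by simp
qed

lemma poly_fun_coeffs_pderiv:
  "poly_fun_coeffs P \<Longrightarrow> poly_fun_coeffs (\<lambda>M. pderiv (P M))"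
  unfolding poly_fun_coeffs_def coeff_pderiv by (auto intro: poly_fun_const_mult)

text \<open>The degrees must not depend on the matrix: they fix the size of the Sylvester matrix.\<close>

lemma poly_fun_resultant:
  assumes "poly_fun_coeffs P" "poly_fun_coeffs Q" "\<And>M. degree (P M) = m" "\<And>M. degree (Q M) = n"
  shows "poly_fun (\<lambda>M. resultant (P M) (Q M))"
proof -
  have det: "resultant (P M) (Q M) =
     (\<Sum>p | p permutes {0..<m+n}. of_int (sign p) *
        (\<Prod>i = 0..<m+n. sylvester_mat_sub m n (P M) (Q M) $$ (i, p i)))" for M
    unfolding resultant_def sylvester_mat_def assms(3,4) Determinant.det_def by simp
  have entries: "poly_fun (\<lambda>M. sylvester_mat_sub m n (P M) (Q M) $$ (i, j))"
    if "i < m+n" "j < m+n" for i j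
    unfolding sylvester_mat_sub_index[OF that]
    using assms(1,2) unfolding poly_fun_coeffs_def
    by (intro poly_fun_if poly_fun.const) auto
  show ?thesis
    unfolding det
    by (intro poly_fun_sum poly_fun_const_mult poly_fun_prod entries)
       (auto simp: finite_permutations permutes_in_image)
qed

section \<open>Roots of complex polynomials\<close>

lemma resultant_eq_0_iff_common_root:
  fixes f g :: "complex poly"
  assumes "f \<noteq> 0"
  shows "resultant f g = 0 \<longleftrightarrow> (\<exists>t. poly f t = 0 \<and> poly g t = 0)"
proof -
  have "degree (gcd f g) \<noteq> 0 \<longleftrightarrow> (\<exists>t. poly f t = 0 \<and> poly g t = 0)"
  proof
    assume "degree (gcd f g) \<noteq> 0"
    then have "\<not> constant (poly (gcd f g))" by (simp add: constant_degree)
    then obtain z where "poly (gcd f g) z = 0" using fundamental_theorem_of_algebra by blast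
    moreover have "gcd f g dvd f" "gcd f g dvd g" by auto
    ultimately show "\<exists>t. poly f t = 0 \<and> poly g t = 0"
      by (metis dvd_def mult_eq_0_iff poly_mult)
  next
    assume "\<exists>t. poly f t = 0 \<and> poly g t = 0"
    then obtain t where "poly f t = 0" "poly g t = 0" by blast
    then have "[:-t, 1:] dvd gcd f g" by (simp add: poly_eq_0_iff_dvd)
    from dvd_imp_degree_le[OF this] show "degree (gcd f g) \<noteq> 0" using assms by simp
  qed
  then show ?thesis using resultant_0_gcd by blast
qed

corollary resultant_pderiv_neq_0_iff_rsquarefree:
  fixes p :: "complex poly"
  assumes "p \<noteq> 0"
  shows "resultant p (pderiv p) \<noteq> 0 \<longleftrightarrow> rsquarefree p"
  using resultant_eq_0_iff_common_root[OF assms] rsquarefree_roots by blast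

lemma card_roots_rsquarefree:
  fixes p :: "complex poly"
  assumes "rsquarefree p"
  shows "card {t. poly p t = 0} = degree p"
proof -
  have "p \<noteq> 0" using assms by (simp add: rsquarefree_def)
  have "degree p = degree (Polynomial.smult (lead_coeff p) (\<Prod>z | poly p z = 0. [:-z, 1:]))"
    using complex_poly_decompose_rsquarefree[OF assms] by simp
  also have "\<dots> = degree (\<Prod>z | poly p z = 0. [:-z, 1:])" using \<open>p \<noteq> 0\<close> by simp
  also have "\<dots> = (\<Sum>z | poly p z = 0. degree [:-z, 1:])"
    by (rule degree_prod_eq_sum_degree) auto
  also have "\<dots> = card {t. poly p t = 0}" by simp
  finally show ?thesis ..
qed

section \<open>Products of linear polynomials\<close>

definition lin_prod :: "'i set \<Rightarrow> ('i \<Rightarrow> 'a::comm_ring_1) \<Rightarrow> ('i \<Rightarrow> 'a) \<Rightarrow> 'a poly" where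
  "lin_prod I a s = (\<Prod>i\<in>I. [:s i, a i:])"

lemma poly_lin_prod: "poly (lin_prod I a s) t = (\<Prod>i\<in>I. s i + t * a i)"
  unfolding lin_prod_def poly_prod by simp

lemma degree_lin_prod:
  fixes a :: "'i \<Rightarrow> 'a::idom"
  assumes "finite I" "\<And>i. i \<in> I \<Longrightarrow> a i \<noteq> 0"
  shows "degree (lin_prod I a s) = card I"
proof -
  have "degree (lin_prod I a s) = (\<Sum>i\<in>I. degree [:s i, a i:])"
    unfolding lin_prod_def using assms by (intro degree_prod_eq_sum_degree) auto
  also have "\<dots> = card I" using assms by simp
  finally show ?thesis .
qed

lemma pderiv_linear: "pderiv [:x, y:] = [:y:]"
  by (simp add: pderiv_pCons)

lemma poly_pderiv_lin_prod:
  fixes a :: "'i \<Rightarrow> 'a::idom"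
  shows "poly (pderiv (lin_prod I a s)) t = (\<Sum>k\<in>I. (\<Prod>j\<in>I-{k}. s j + t * a j) * a k)"
  unfolding lin_prod_def pderiv_prod poly_sum poly_mult poly_prod pderiv_linear by simp

lemma poly_pderiv2_lin_prod:
  fixes a :: "'i \<Rightarrow> 'a::idom"
  assumes "finite I"
  shows "poly (pderiv (pderiv (lin_prod I a s))) t =
    (\<Sum>k\<in>I. (\<Sum>l\<in>I-{k}. (\<Prod>j\<in>I-{k}-{l}. s j + t * a j) * a l) * a k)"
proof -
  have "pderiv (pderiv (lin_prod I a s)) = pderiv (\<Sum>k\<in>I. (\<Prod>j\<in>I-{k}. [:s j, a j:]) * [:a k:])"
    unfolding lin_prod_def pderiv_prod pderiv_linear by simp
  also have "\<dots> = (\<Sum>k\<in>I. pderiv (\<Prod>j\<in>I-{k}. [:s j, a j:]) * [:a k:])"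
    by (simp add: pderiv_sum pderiv_mult pderiv_smult)
  also have "\<dots> = (\<Sum>k\<in>I. (\<Sum>l\<in>I-{k}. (\<Prod>j\<in>I-{k}-{l}. [:s j, a j:]) * [:a l:]) * [:a k:])"
    unfolding pderiv_prod pderiv_linear by simp
  finally show ?thesis by (simp add: poly_sum poly_prod mult.commute)
qed

lemma poly_pderiv_lin_prod_at_simple_root:
  fixes a :: "'i \<Rightarrow> 'a::idom"
  assumes "finite I" "i \<in> I" "s i + t * a i = 0" "a i \<noteq> 0"
    and "\<And>j. j \<in> I \<Longrightarrow> j \<noteq> i \<Longrightarrow> s j + t * a j \<noteq> 0"
  shows "poly (pderiv (lin_prod I a s)) t = (\<Prod>j\<in>I-{i}. s j + t * a j) * a i"
proof -
  have "(\<Prod>j\<in>I-{k}. s j + t * a j) = 0" if "k \<in> I - {i}" for k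
    using assms that by (intro prod_zero) auto
  then have "(\<Sum>k\<in>I-{i}. (\<Prod>j\<in>I-{k}. s j + t * a j) * a k) = 0" by simp
  then show ?thesis
    unfolding poly_pderiv_lin_prod using assms(1,2) by (simp add: sum.remove)
qed

lemma poly_pderiv_lin_prod_eq:
  fixes a :: "'i \<Rightarrow> 'a::field"
  assumes "finite I" "\<And>j. j \<in> I \<Longrightarrow> s j + t * a j \<noteq> 0"
  shows "poly (pderiv (lin_prod I a s)) t =
    poly (lin_prod I a s) t * (\<Sum>k\<in>I. a k / (s k + t * a k))"
proof -
  have "(\<Prod>j\<in>I-{k}. s j + t * a j) = (\<Prod>j\<in>I. s j + t * a j) / (s k + t * a k)" if "k \<in> I" for k
    using assms that by (simp add: prod.remove[of I k])
  then show ?thesis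
    unfolding poly_pderiv_lin_prod poly_lin_prod sum_distrib_left by (intro sum.cong) auto
qed

lemma sum_products_distinct_eq:
  fixes z :: "'i \<Rightarrow> 'a::comm_ring_1"
  assumes "finite I"
  shows "(\<Sum>k\<in>I. \<Sum>l\<in>I-{k}. z k * z l) = (\<Sum>k\<in>I. z k)^2 - (\<Sum>k\<in>I. (z k)^2)"
proof -
  have "(\<Sum>k\<in>I. \<Sum>l\<in>I-{k}. z k * z l) = (\<Sum>k\<in>I. z k * ((\<Sum>l\<in>I. z l) - z k))"
    using assms by (intro sum.cong) (auto simp: sum_diff1 sum_distrib_left[symmetric])
  also have "\<dots> = (\<Sum>k\<in>I. z k)^2 - (\<Sum>k\<in>I. (z k)^2)"
    by (simp add: algebra_simps power2_eq_square sum_subtractf sum_distrib_right[symmetric])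
  finally show ?thesis .
qed

lemma poly_pderiv2_lin_prod_eq:
  fixes a :: "'i \<Rightarrow> 'a::field"
  assumes "finite I" "\<And>j. j \<in> I \<Longrightarrow> s j + t * a j \<noteq> 0"
  defines "z \<equiv> \<lambda>k. a k / (s k + t * a k)"
  shows "poly (pderiv (pderiv (lin_prod I a s))) t =
    poly (lin_prod I a s) t * ((\<Sum>k\<in>I. z k)^2 - (\<Sum>k\<in>I. (z k)^2))"
proof -
  let ?w = "\<lambda>j. s j + t * a j"
  have "(\<Prod>j\<in>I-{k}-{l}. ?w j) = (\<Prod>j\<in>I. ?w j) / (?w k * ?w l)"
    if "k \<in> I" "l \<in> I" "l \<noteq> k" for k l
  proof -
    have "(\<Prod>j\<in>I. ?w j) = ?w k * (\<Prod>j\<in>I-{k}. ?w j)"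
      using assms that by (simp add: prod.remove[of I k])
    also have "(\<Prod>j\<in>I-{k}. ?w j) = ?w l * (\<Prod>j\<in>I-{k}-{l}. ?w j)"
      using assms that by (simp add: prod.remove[of "I-{k}" l])
    finally show ?thesis using assms that by simp
  qed
  then have "poly (pderiv (pderiv (lin_prod I a s))) t =
      poly (lin_prod I a s) t * (\<Sum>k\<in>I. \<Sum>l\<in>I-{k}. z k * z l)"
    unfolding poly_pderiv2_lin_prod[OF assms(1)] poly_lin_prod z_def sum_distrib_left
    by (intro sum.cong) (auto simp: sum_distrib_left sum_distrib_right intro!: sum.cong)
  then show ?thesis by (simp only: sum_products_distinct_eq[OF assms(1)])
qed

lemma sum_inverse_sq_neq_0_if_sum_inverse_eq_0:
  fixes c :: "'i \<Rightarrow> real" and t :: complex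
  assumes "finite I" "I \<noteq> {}" "\<And>k. k \<in> I \<Longrightarrow> of_real (c k) + t \<noteq> 0"
    and sum_eq_0: "(\<Sum>k\<in>I. 1 / (of_real (c k) + t)) = 0"
  shows "(\<Sum>k\<in>I. (1 / (of_real (c k) + t))^2) \<noteq> 0"
proof -
  let ?d = "\<lambda>k. (c k + Re t)^2 + (Im t)^2"
  have "?d k > 0" if "k \<in> I" for k
  proof -
    have "c k + Re t \<noteq> 0 \<or> Im t \<noteq> 0"
      using assms(3)[OF that] by (auto simp: complex_eq_iff)
    then show ?thesis by (auto simp: add_pos_nonneg sum_power2_gt_zero_iff)
  qed
  then have "(\<Sum>k\<in>I. 1 / ?d k) > 0" using assms(1,2) by (intro sum_pos) auto
  moreover have "Im (\<Sum>k\<in>I. 1 / (of_real (c k) + t)) = - Im t * (\<Sum>k\<in>I. 1 / ?d k)"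
    by (simp add: Im_divide power2_eq_square sum_distrib_left sum_negf)
  ultimately have "Im t = 0" using sum_eq_0 by simp
  then have t_real: "t = of_real (Re t)" by (simp add: complex_eq_iff)
  have "c k + Re t \<noteq> 0" if "k \<in> I" for k
    using assms(3)[OF that] t_real by (metis of_real_add of_real_eq_0_iff)
  then have "(\<Sum>k\<in>I. (1 / (c k + Re t))^2) > 0" using assms(1,2) by (intro sum_pos) auto
  moreover have "(\<Sum>k\<in>I. (1 / (of_real (c k) + t))^2) = of_real (\<Sum>k\<in>I. (1 / (c k + Re t))^2)"
    by (subst t_real) simp
  ultimately show ?thesis by (metis of_real_eq_0_iff less_irrefl)
qed

lemma rsquarefree_lin_prod_real_shifts:
  fixes c :: "'i \<Rightarrow> real" and a s :: "'i \<Rightarrow> complex"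
  assumes "finite I" "\<And>k. k \<in> I \<Longrightarrow> a k \<noteq> 0" "inj_on c I"
    and "\<And>k. k \<in> I \<Longrightarrow> s k = a k * of_real (c k)"
  shows "rsquarefree (lin_prod I a s)"
  unfolding rsquarefree_roots
proof (intro allI notI)
  fix t
  assume root: "poly (lin_prod I a s) t = 0 \<and> poly (pderiv (lin_prod I a s)) t = 0"
  have factor: "s k + t * a k = a k * (of_real (c k) + t)" if "k \<in> I" for k
    using assms(4)[OF that] by (simp add: algebra_simps)
  obtain i where i: "i \<in> I" "s i + t * a i = 0"
    using root assms(1) unfolding poly_lin_prod by auto
  then have t: "t = - of_real (c i)"
    using factor assms(2) by (simp add: add_eq_0_iff)
  have "s j + t * a j \<noteq> 0" if "j \<in> I" "j \<noteq> i" for j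
  proof -
    have "c j \<noteq> c i" using assms(3) that i(1) by (auto dest: inj_onD)
    then show ?thesis using factor[OF that(1)] assms(2)[OF that(1)] t by simp
  qed
  then have "poly (pderiv (lin_prod I a s)) t \<noteq> 0"
    using poly_pderiv_lin_prod_at_simple_root[of I i s t a] assms(1,2) i by simp
  with root show False by blast
qed

lemma rsquarefree_pderiv_lin_prod_real_shifts:
  fixes c :: "'i \<Rightarrow> real" and a s :: "'i \<Rightarrow> complex"
  assumes "finite I" "\<And>k. k \<in> I \<Longrightarrow> a k \<noteq> 0" "inj_on c I"
    and "\<And>k. k \<in> I \<Longrightarrow> s k = a k * of_real (c k)" and "I \<noteq> {}"
  shows "rsquarefree (pderiv (lin_prod I a s))"
  unfolding rsquarefree_roots
proof (intro allI notI)
  fix t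
  assume crit: "poly (pderiv (lin_prod I a s)) t = 0 \<and> poly (pderiv (pderiv (lin_prod I a s))) t = 0"
  then have "poly (lin_prod I a s) t \<noteq> 0"
    using rsquarefree_lin_prod_real_shifts[OF assms(1-4)] unfolding rsquarefree_roots by blast
  then have nz: "s k + t * a k \<noteq> 0" if "k \<in> I" for k
    using assms(1) that unfolding poly_lin_prod by auto
  have factor: "s k + t * a k = a k * (of_real (c k) + t)" if "k \<in> I" for k
    using assms(4)[OF that] by (simp add: algebra_simps)
  have z: "a k / (s k + t * a k) = 1 / (of_real (c k) + t)" if "k \<in> I" for k
    using factor[OF that] assms(2)[OF that] by simp
  have nz': "of_real (c k) + t \<noteq> 0" if "k \<in> I" for k
    using nz[OF that] factor[OF that] by simp
  have "(\<Sum>k\<in>I. a k / (s k + t * a k)) = 0"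
    using crit \<open>poly (lin_prod I a s) t \<noteq> 0\<close> poly_pderiv_lin_prod_eq[OF assms(1) nz] by simp
  then have sum1: "(\<Sum>k\<in>I. 1 / (of_real (c k) + t)) = 0"
    using z by (simp cong: sum.cong)
  have "(\<Sum>k\<in>I. a k / (s k + t * a k))^2 - (\<Sum>k\<in>I. (a k / (s k + t * a k))^2) = 0"
    using crit \<open>poly (lin_prod I a s) t \<noteq> 0\<close> poly_pderiv2_lin_prod_eq[OF assms(1) nz] by simp
  then have "(\<Sum>k\<in>I. (1 / (of_real (c k) + t))^2) = 0"
    using sum1 z by (simp cong: sum.cong)
  then show False using sum_inverse_sq_neq_0_if_sum_inverse_eq_0[OF assms(1,5) nz' sum1] by blast
qed

section \<open>Diagonal matrices\<close>

definition diag_mat :: "('n \<Rightarrow> 'a::zero) \<Rightarrow> 'a^'n^'n" where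
  "diag_mat d = (\<chi> i j. if i = j then d i else 0)"

lemma diag_mat_nth [simp]: "diag_mat d $ i $ j = (if i = j then d i else 0)"
  by (simp add: diag_mat_def)

lemma diag_mat_eq:
  assumes "\<And>i j. i \<noteq> j \<Longrightarrow> M $ i $ j = 0"
  shows "M = diag_mat (\<lambda>i. M $ i $ i)"
  using assms by (simp add: Finite_Cartesian_Product.vec_eq_iff)

lemma diag_mat_in_sym_mats: "diag_mat d \<in> sym_mats"
  by (simp add: sym_mats_def Finite_Cartesian_Product.vec_eq_iff transpose_def)

lemma sym_mats_diff: "M \<in> sym_mats \<Longrightarrow> N \<in> sym_mats \<Longrightarrow> M - N \<in> sym_mats"
  by (simp add: sym_mats_def Finite_Cartesian_Product.vec_eq_iff transpose_def)

lemma diag_mat_mult: "diag_mat d ** diag_mat e = diag_mat (\<lambda>i. d i * e i)"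
  by (simp add: Finite_Cartesian_Product.vec_eq_iff matrix_matrix_mult_def
      if_distrib[where f = "\<lambda>x. x * _"] if_distrib[where f = "\<lambda>x. _ * x"] cong: if_cong)

lemma trace_diag_mat_mult: "trace (diag_mat d ** M) = (\<Sum>i\<in>UNIV. d i * M $ i $ i)"
  by (simp add: trace_def matrix_matrix_mult_def if_distrib[where f = "\<lambda>x. x * _"] cong: if_cong)

lemma invertible_diag_mat_iff:
  fixes d :: "'n::finite \<Rightarrow> 'a::field"
  shows "invertible (diag_mat d) \<longleftrightarrow> (\<forall>i. d i \<noteq> 0)"
  by (simp add: invertible_det_nz det_diagonal)

lemma matrix_inv_eqI:
  fixes A B :: "'a::semiring_1^'n^'n"
  assumes AB: "A ** B = Finite_Cartesian_Product.mat 1" and BA: "B ** A = Finite_Cartesian_Product.mat 1"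
  shows "matrix_inv A = B"
proof -
  let ?C = "matrix_inv A"
  have "?C ** A = Finite_Cartesian_Product.mat 1"
    unfolding matrix_inv_def using AB BA by (rule someI[of _ B, OF conjI, THEN conjunct2])
  then have "B = ?C ** (A ** B)" by (simp add: matrix_mul_assoc)
  then show ?thesis using AB by simp
qed

lemma matrix_inv_diag_mat:
  fixes d :: "'n::finite \<Rightarrow> 'a::field"
  assumes "\<And>i. d i \<noteq> 0"
  shows "matrix_inv (diag_mat d) = diag_mat (\<lambda>i. 1 / d i)"
proof (rule matrix_inv_eqI)
  have "diag_mat (\<lambda>_. 1::'a) = Finite_Cartesian_Product.mat 1"
    by (simp add: Finite_Cartesian_Product.vec_eq_iff Finite_Cartesian_Product.mat_def)
  then show "diag_mat d ** diag_mat (\<lambda>i. 1 / d i) = Finite_Cartesian_Product.mat 1"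
    and "diag_mat (\<lambda>i. 1 / d i) ** diag_mat d = Finite_Cartesian_Product.mat 1"
    using assms by (simp_all add: diag_mat_mult)
qed

lemma rank_diag_mat:
  fixes d :: "'n::finite \<Rightarrow> 'a::field"
  shows "rank (diag_mat d) = card {i. d i \<noteq> 0}"
proof -
  let ?I = "{i. d i \<noteq> 0}"
  let ?rows = "Finite_Cartesian_Product.rows (diag_mat d)"
  let ?V = "{x::'a^'n. \<forall>i. i \<notin> ?I \<longrightarrow> x $ i = 0}"
  have "vec.span ?rows = ?V"
  proof
    show "vec.span ?rows \<subseteq> ?V"
      by (rule vec.span_minimal[OF _ subspace_substandard_cart])
         (auto simp: Finite_Cartesian_Product.rows_def Finite_Cartesian_Product.row_def)
    show "?V \<subseteq> vec.span ?rows"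
    proof
      fix x assume x: "x \<in> ?V"
      have "(\<Sum>k\<in>?I. (x $ k / d k) *s Finite_Cartesian_Product.row k (diag_mat d)) $ i = x $ i"
        for i
      proof -
        have "(\<Sum>k\<in>?I. (x $ k / d k) *s Finite_Cartesian_Product.row k (diag_mat d)) $ i
            = (\<Sum>k\<in>?I. if k = i then x $ i else 0)"
          unfolding sum_component
          by (intro sum.cong) (auto simp: Finite_Cartesian_Product.row_def)
        also have "\<dots> = x $ i" using x by simp
        finally show ?thesis .
      qed
      then have "x = (\<Sum>i\<in>?I. (x $ i / d i) *s Finite_Cartesian_Product.row i (diag_mat d))"
        by (simp add: Finite_Cartesian_Product.vec_eq_iff)
      also have "\<dots> \<in> vec.span ?rows"
        by (intro vec.span_sum vec.span_scale vec.span_base)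
           (auto simp: Finite_Cartesian_Product.rows_def)
      finally show "x \<in> vec.span ?rows" .
    qed
  qed
  then have "vec.dim ?rows = vec.dim ?V" by (metis vec.dim_span)
  then show ?thesis unfolding row_rank_def_gen dim_substandard_cart .
qed

section \<open>Diagonal matrices orthogonal to a diagonal matrix\<close>

locale diag_trace_hyperplane =
  fixes a :: "'n::finite \<Rightarrow> complex"
  assumes nonzero: "\<exists>i. a i \<noteq> 0"
begin

definition supp :: "'n set" where
  "supp = {i. a i \<noteq> 0}"

definition \<L> :: "(complex^'n^'n) set" where
  "\<L> = {K \<in> sym_mats. (\<forall>i j. i \<noteq> j \<longrightarrow> K $ i $ j = 0) \<and> trace (diag_mat a ** K) = 0}"

lemma supp_nonempty: "supp \<noteq> {}"
  using nonzero by (auto simp: supp_def)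

lemma sum_supp: "(\<Sum>i\<in>UNIV. a i * f i) = (\<Sum>i\<in>supp. a i * f i)"
  by (rule sum.mono_neutral_right) (auto simp: supp_def)

lemma mem_\<L>_iff: "K \<in> \<L> \<longleftrightarrow> (\<exists>k. K = diag_mat k \<and> (\<Sum>i\<in>UNIV. a i * k i) = 0)"
proof
  assume K: "K \<in> \<L>"
  then have "K = diag_mat (\<lambda>i. K $ i $ i)" unfolding \<L>_def by (intro diag_mat_eq) auto
  moreover have "(\<Sum>i\<in>UNIV. a i * K $ i $ i) = 0"
    using K unfolding \<L>_def trace_diag_mat_mult by simp
  ultimately show "\<exists>k. K = diag_mat k \<and> (\<Sum>i\<in>UNIV. a i * k i) = 0" by blast
next
  assume "\<exists>k. K = diag_mat k \<and> (\<Sum>i\<in>UNIV. a i * k i) = 0"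
  then show "K \<in> \<L>"
    unfolding \<L>_def by (auto simp: diag_mat_in_sym_mats trace_diag_mat_mult)
qed

lemma orth_space_\<L>_iff:
  "\<Sigma> \<in> orth_space \<L> \<longleftrightarrow> \<Sigma> \<in> sym_mats \<and> (\<exists>t. \<forall>i. \<Sigma> $ i $ i = t * a i)"
proof
  assume \<Sigma>: "\<Sigma> \<in> orth_space \<L>"
  obtain i0 where i0: "a i0 \<noteq> 0" using nonzero by blast
  have "\<Sigma> $ j $ j = (\<Sigma> $ i0 $ i0 / a i0) * a j" for j
  proof (cases "j = i0")
    case True
    then show ?thesis using i0 by simp
  next
    case False
    define k where "k l = (if l = j then a i0 else 0) - (if l = i0 then a j else 0)" for l
    have "(\<Sum>l\<in>UNIV. a l * k l) = 0"
      unfolding k_def using False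
      by (simp add: right_diff_distrib sum_subtractf if_distrib[where f = "\<lambda>x. _ * x"] cong: if_cong)
    then have "diag_mat k \<in> \<L>" unfolding mem_\<L>_iff by blast
    then have "trace (diag_mat k ** \<Sigma>) = 0" using \<Sigma> unfolding orth_space_def by blast
    then have "a i0 * \<Sigma> $ j $ j - a j * \<Sigma> $ i0 $ i0 = 0"
      unfolding trace_diag_mat_mult k_def using False
      by (simp add: left_diff_distrib sum_subtractf if_distrib[where f = "\<lambda>x. x * _"] cong: if_cong)
    then show ?thesis using i0 by (simp add: field_simps)
  qed
  moreover have "\<Sigma> \<in> sym_mats" using \<Sigma> by (simp add: orth_space_def)
  ultimately show "\<Sigma> \<in> sym_mats \<and> (\<exists>t. \<forall>i. \<Sigma> $ i $ i = t * a i)" by blast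
next
  assume "\<Sigma> \<in> sym_mats \<and> (\<exists>t. \<forall>i. \<Sigma> $ i $ i = t * a i)"
  then obtain t where \<Sigma>: "\<Sigma> \<in> sym_mats" "\<And>i. \<Sigma> $ i $ i = t * a i" by blast
  have "trace (K ** \<Sigma>) = 0" if K: "K \<in> \<L>" for K
  proof -
    obtain k where k: "K = diag_mat k" "(\<Sum>i\<in>UNIV. a i * k i) = 0"
      using mem_\<L>_iff[THEN iffD1, OF K] by blast
    have "trace (K ** \<Sigma>) = t * (\<Sum>i\<in>UNIV. a i * k i)"
      unfolding k(1) trace_diag_mat_mult \<Sigma>(2) by (simp add: sum_distrib_left algebra_simps)
    then show ?thesis using k(2) by simp
  qed
  then show "\<Sigma> \<in> orth_space \<L>" using \<Sigma>(1) by (simp add: orth_space_def)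
qed

text \<open>On invertible diagonal matrices \<open>M\<close> this is \<open>tr (A M\<^sup>-\<^sup>1) = 0\<close> multiplied by
  \<open>\<Prod>\<^bsub>j \<in> supp\<^esub> M\<^sub>j\<^sub>j\<close>: the equation of \<L> pulled back along inversion.\<close>

definition recip_hypersurface :: "(complex^'n^'n) set" where
  "recip_hypersurface = {M. (\<forall>i j. i \<noteq> j \<longrightarrow> M $ i $ j = 0) \<and>
     (\<Sum>k\<in>supp. (\<Prod>j\<in>supp-{k}. M $ j $ j) * a k) = 0}"

lemma zariski_closed_recip_hypersurface: "zariski_closed recip_hypersurface"
proof -
  define P where "P = {(\<lambda>M::complex^'n^'n. M $ i $ j) | i j. i \<noteq> j} \<union>
    {(\<lambda>M. \<Sum>k\<in>supp. (\<Prod>j\<in>supp-{k}. M $ j $ j) * a k)}"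
  have "\<forall>p\<in>P. poly_fun p"
    unfolding P_def
    by (auto intro!: poly_fun.coord poly_fun_sum poly_fun.mult poly_fun_prod poly_fun.const)
  moreover have "recip_hypersurface = {M. \<forall>p\<in>P. p M = 0}"
    unfolding recip_hypersurface_def P_def by auto
  ultimately show ?thesis unfolding zariski_closed_def by blast
qed

lemma matrix_inv_in_recip_hypersurface:
  assumes "K \<in> \<L>" "invertible K"
  shows "matrix_inv K \<in> recip_hypersurface"
proof -
  obtain k where K: "K = diag_mat k" "(\<Sum>i\<in>UNIV. a i * k i) = 0"
    using mem_\<L>_iff[THEN iffD1, OF assms(1)] by blast
  have "invertible (diag_mat k)" using assms(2) K(1) by simp
  then have k_nz: "\<And>i. k i \<noteq> 0" by (simp add: invertible_diag_mat_iff)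
  have "(\<Prod>j\<in>supp-{m}. 1 / k j) = (\<Prod>j\<in>supp. 1 / k j) * k m" if "m \<in> supp" for m
    using that k_nz by (simp add: prod.remove[of supp m])
  then have "(\<Sum>m\<in>supp. (\<Prod>j\<in>supp-{m}. 1 / k j) * a m)
      = (\<Prod>j\<in>supp. 1 / k j) * (\<Sum>m\<in>supp. a m * k m)"
    by (auto simp: sum_distrib_left intro!: sum.cong)
  also have "\<dots> = 0" using K(2) sum_supp by simp
  finally show ?thesis
    unfolding K(1) matrix_inv_diag_mat[OF k_nz] recip_hypersurface_def by simp
qed

lemma reciprocal_variety_subset: "reciprocal_variety \<L> \<subseteq> recip_hypersurface"
  by (intro reciprocal_variety_subset_zariski_closed zariski_closed_recip_hypersurface
      matrix_inv_in_recip_hypersurface)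

lemma diag_mat_in_reciprocal_variety:
  assumes "\<And>j. w j \<noteq> 0" "(\<Sum>i\<in>UNIV. a i / w i) = 0"
  shows "diag_mat w \<in> reciprocal_variety \<L>"
proof -
  let ?K = "diag_mat (\<lambda>j. 1 / w j)"
  have "?K \<in> \<L>" using assms(2) unfolding mem_\<L>_iff by (intro exI[of _ "\<lambda>j. 1 / w j"]) simp
  moreover have "invertible ?K" using assms(1) by (simp add: invertible_diag_mat_iff)
  ultimately have "matrix_inv ?K \<in> reciprocal_variety \<L>" by (rule matrix_inv_in_reciprocal_variety)
  then show ?thesis using assms(1) by (simp add: matrix_inv_diag_mat)
qed

definition diag_line :: "complex^'n^'n \<Rightarrow> complex \<Rightarrow> complex^'n^'n" where
  "diag_line S t = diag_mat (\<lambda>i. S $ i $ i + t * a i)"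

definition line_poly :: "complex^'n^'n \<Rightarrow> complex poly" where
  "line_poly S = lin_prod supp a (\<lambda>i. S $ i $ i)"

lemma diag_line_in_recip_hypersurface_iff:
  "diag_line S t \<in> recip_hypersurface \<longleftrightarrow> poly (pderiv (line_poly S)) t = 0"
  by (simp add: diag_line_def line_poly_def recip_hypersurface_def poly_pderiv_lin_prod)

lemma inj_diag_line: "inj (diag_line S)"
proof (rule injI)
  fix t u assume "diag_line S t = diag_line S u"
  then have "diag_line S t $ i $ i = diag_line S u $ i $ i" for i by simp
  moreover obtain i where "a i \<noteq> 0" using nonzero by blast
  ultimately show "t = u" unfolding diag_line_def by force
qed

lemma degree_line_poly: "degree (line_poly S) = card supp"
  unfolding line_poly_def by (rule degree_lin_prod) (auto simp: supp_def)

lemma degree_pderiv_line_poly: "degree (pderiv (line_poly S)) = card supp - 1"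
  by (simp add: degree_pderiv degree_line_poly)

lemma pderiv_line_poly_nonzero: "pderiv (line_poly S) \<noteq> 0"
  using supp_nonempty by (simp add: pderiv_eq_0_iff degree_line_poly)

lemma line_poly_nonzero: "line_poly S \<noteq> 0"
  using pderiv_line_poly_nonzero by (metis pderiv_0)

lemma ml_set_\<L>:
  assumes S: "S \<in> sym_mats" and off_supp: "\<And>j. j \<notin> supp \<Longrightarrow> S $ j $ j \<noteq> 0"
    and simple_roots: "rsquarefree (line_poly S)"
  shows "ml_set \<L> S = diag_line S ` {t. poly (pderiv (line_poly S)) t = 0}"
proof (intro equalityI subsetI)
  fix M assume "M \<in> ml_set \<L> S"
  then obtain \<Sigma> where M: "M = \<Sigma> + S" "M \<in> recip_hypersurface" and "\<Sigma> \<in> orth_space \<L>"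
    unfolding ml_set_def using reciprocal_variety_subset by blast
  then obtain t where t: "\<And>i. \<Sigma> $ i $ i = t * a i" using orth_space_\<L>_iff by blast
  have "M = diag_mat (\<lambda>i. M $ i $ i)"
    using M(2) unfolding recip_hypersurface_def by (intro diag_mat_eq) auto
  then have "M = diag_line S t" unfolding diag_line_def M(1) by (simp add: t add.commute)
  then show "M \<in> diag_line S ` {t. poly (pderiv (line_poly S)) t = 0}"
    using M(2) diag_line_in_recip_hypersurface_iff by blast
next
  fix M assume "M \<in> diag_line S ` {t. poly (pderiv (line_poly S)) t = 0}"
  then obtain t where crit: "poly (pderiv (line_poly S)) t = 0" and M: "M = diag_line S t"
    by blast
  define w where "w = (\<lambda>j. S $ j $ j + t * a j)"
  have "poly (line_poly S) t \<noteq> 0" using simple_roots crit unfolding rsquarefree_roots by blast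
  then have w_supp: "w j \<noteq> 0" if "j \<in> supp" for j
    using that unfolding line_poly_def poly_lin_prod w_def by auto
  have w_nz: "w j \<noteq> 0" for j
    using w_supp off_supp by (cases "j \<in> supp") (auto simp: w_def supp_def)
  have "(\<Sum>i\<in>supp. a i / w i) = 0"
    using crit \<open>poly (line_poly S) t \<noteq> 0\<close> poly_pderiv_lin_prod_eq[of supp "\<lambda>i. S $ i $ i" t a]
      w_supp unfolding line_poly_def w_def by simp
  then have "(\<Sum>i\<in>UNIV. a i / w i) = 0" using sum_supp[of "\<lambda>i. 1 / w i"] by simp
  then have "diag_mat w \<in> reciprocal_variety \<L>" by (intro diag_mat_in_reciprocal_variety w_nz)
  then have "M \<in> reciprocal_variety \<L>" by (simp add: M diag_line_def w_def)
  moreover have "M - S \<in> orth_space \<L>"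
    unfolding orth_space_\<L>_iff M diag_line_def
    by (auto intro: sym_mats_diff diag_mat_in_sym_mats S)
  ultimately show "M \<in> ml_set \<L> S" unfolding ml_set_def by force
qed

definition generic_poly :: "complex^'n^'n \<Rightarrow> complex" where
  "generic_poly S = (\<Prod>j\<in>-supp. S $ j $ j) * resultant (line_poly S) (pderiv (line_poly S))
     * resultant (pderiv (line_poly S)) (pderiv (pderiv (line_poly S)))"

lemma generic_poly_neq_0_iff:
  "generic_poly S \<noteq> 0 \<longleftrightarrow>
     (\<forall>j. j \<notin> supp \<longrightarrow> S $ j $ j \<noteq> 0) \<and> rsquarefree (line_poly S) \<and> rsquarefree (pderiv (line_poly S))"
  unfolding generic_poly_def
  using resultant_pderiv_neq_0_iff_rsquarefree[OF line_poly_nonzero]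
    resultant_pderiv_neq_0_iff_rsquarefree[OF pderiv_line_poly_nonzero]
  by auto

lemma poly_fun_generic_poly: "poly_fun generic_poly"
proof -
  have coeffs: "poly_fun_coeffs line_poly"
    unfolding line_poly_def[abs_def] lin_prod_def
    by (intro poly_fun_coeffs_prod poly_fun_coeffs_linear poly_fun.coord poly_fun.const) simp
  have coeffs': "poly_fun_coeffs (\<lambda>S. pderiv (line_poly S))"
    by (rule poly_fun_coeffs_pderiv[OF coeffs])
  have degree2: "degree (pderiv (pderiv (line_poly S))) = card supp - 1 - 1" for S
    by (simp add: degree_pderiv degree_line_poly)
  have "poly_fun (\<lambda>S. (\<Prod>j\<in>-supp. S $ j $ j) * resultant (line_poly S) (pderiv (line_poly S))
     * resultant (pderiv (line_poly S)) (pderiv (pderiv (line_poly S))))"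
    by (intro poly_fun.mult poly_fun_prod poly_fun.coord
        poly_fun_resultant[OF coeffs coeffs' degree_line_poly degree_pderiv_line_poly]
        poly_fun_resultant[OF coeffs' poly_fun_coeffs_pderiv[OF coeffs'] degree_pderiv_line_poly degree2])
       simp
  then show ?thesis by (simp add: generic_poly_def[abs_def])
qed

lemma generic_poly_witness: "\<exists>S\<in>sym_mats. generic_poly S \<noteq> 0"
proof
  define c where "c i = real (to_nat i)" for i :: 'n
  define S where "S = diag_mat (\<lambda>i. if i \<in> supp then a i * of_real (c i) else 1)"
  show "S \<in> sym_mats" unfolding S_def by (rule diag_mat_in_sym_mats)
  have "inj_on c supp" unfolding c_def inj_on_def by simp
  moreover have "a i \<noteq> 0" if "i \<in> supp" for i using that by (simp add: supp_def)
  moreover have "S $ i $ i = a i * of_real (c i)" if "i \<in> supp" for i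
    using that by (simp add: S_def)
  ultimately have "rsquarefree (line_poly S)" "rsquarefree (pderiv (line_poly S))"
    unfolding line_poly_def
    by (auto intro!: rsquarefree_lin_prod_real_shifts rsquarefree_pderiv_lin_prod_real_shifts
        supp_nonempty)
  then show "generic_poly S \<noteq> 0" unfolding generic_poly_neq_0_iff by (simp add: S_def)
qed

lemma card_ml_set_\<L>:
  assumes "S \<in> sym_mats" "generic_poly S \<noteq> 0"
  shows "finite (ml_set \<L> S) \<and> card (ml_set \<L> S) = card supp - 1"
proof -
  have "finite {t. poly (pderiv (line_poly S)) t = 0}"
    using poly_roots_finite[OF pderiv_line_poly_nonzero] .
  moreover have "card {t. poly (pderiv (line_poly S)) t = 0} = card supp - 1"
    using assms(2) card_roots_rsquarefree degree_pderiv_line_poly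
    unfolding generic_poly_neq_0_iff by metis
  ultimately show ?thesis
    using assms generic_poly_neq_0_iff ml_set_\<L> card_image[OF inj_on_subset[OF inj_diag_line]]
    by simp
qed

theorem has_ml_degree_\<L>: "has_ml_degree \<L> (card supp - 1)"
  unfolding has_ml_degree_def
  using poly_fun_generic_poly generic_poly_witness card_ml_set_\<L> by blast

end

theorem proposition3p7:
  fixes A :: "complex^'n^'n"
  assumes "is_diagonal A"
    and "A \<noteq> 0"
    and "L = {K\<in>sym_mats. (\<forall>i j. i \<noteq> j \<longrightarrow> K $ i $ j = 0) \<and> trace (A ** K) = 0}"
    and "regular_subspace L"
  shows "has_ml_degree L (rank A - 1)"
proof -
  define a where "a i = A $ i $ i" for i
  have A: "A = diag_mat a"
    unfolding a_def using assms(1) unfolding is_diagonal_def by (intro diag_mat_eq) blast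
  have "\<exists>i. a i \<noteq> 0"
  proof (rule ccontr)
    assume "\<not> (\<exists>i. a i \<noteq> 0)"
    then have "A = 0" using A by (simp add: Finite_Cartesian_Product.vec_eq_iff)
    with assms(2) show False ..
  qed
  then interpret diag_trace_hyperplane a by unfold_locales
  have "L = \<L>" using assms(3) A by (simp add: \<L>_def)
  moreover have "rank A = card supp" using A by (simp add: rank_diag_mat supp_def)
  ultimately show ?thesis using has_ml_degree_\<L> by simp
qed

end
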